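(* Let $k\ge 2$ be a power of $2$ and let $S$ be a subset of $\mathbb F_k^2$. Then there exists $\mathbf u\in\mathbb F_k^2$ such that for every subset $Z\subseteq\mathbb F_k$ with exactly $k/2$ elements, \[|\{\mathbf s\in S:\mathbf s\cdot\mathbf u\in Z\}|\le\frac{|S|+k^{1.5}}{2}.\]
   Context: $\mathbb F_k$ is the finite field with $k$ elements, and for $\mathbf s=(s_1,s_2),\mathbf u=(u_1,u_2)\in\mathbb F_k^2$, $\mathbf s\cdot\mathbf u=s_1u_1+s_2u_2\in\mathbb F_k$. *)

theory Defs
  imports Complex_Main "HOL-Library.Cardinality"
begin

definition dot2 :: "'a::field \<times> 'a \<Rightarrow> 'a \<times> 'a \<Rightarrow> 'a" where
  "dot2 s u = fst s * fst u + snd s * snd u"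

end

theory Submission
  imports Defs "HOL-Analysis.Convex"
begin

text \<open>For a direction u let N u t be the number of s \<in> S with s \<cdot> u = t. Two distinct points
  s, s' have s \<cdot> u = s' \<cdot> u only for the k directions u on a line, so summing the collision
  numbers \<Sum>t. (N u t)^2 over all k^2 directions gives at most |S| k^2 + |S|^2 k. Hence some u has
  \<Sum>t. (N u t - |S|/k)^2 \<le> |S|. If |Z| = k/2, then Z and its complement carry opposite
  deviations from the mean, and Cauchy-Schwarz on both halves gives
  (2 |{s. s \<cdot> u \<in> Z}| - |S|)^2 \<le> k |S| \<le> k^3.\<close>

definition collisions :: "('b \<Rightarrow> 'c) \<Rightarrow> 'b set \<Rightarrow> nat" where
  "collisions f S = (\<Sum>s\<in>S. card {s'\<in>S. f s' = f s})"

lemma sum_card_fibres: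
  assumes "finite S" "finite Z"
  shows "(\<Sum>t\<in>Z. card {s\<in>S. f s = t}) = card {s\<in>S. f s \<in> Z}"
proof -
  have "(\<Sum>t\<in>Z. card {s\<in>S. f s = t}) = (\<Sum>t\<in>Z. card {s\<in>{s\<in>S. f s \<in> Z}. f s = t})"
    by (intro sum.cong arg_cong[where f = card]) auto
  also have "\<dots> = card {s\<in>S. f s \<in> Z}"
    using assms sum.group[of "{s\<in>S. f s \<in> Z}" Z f "\<lambda>_. 1::nat"] by auto
  finally show ?thesis .
qed

lemma sum_card_fibres_squared:
  fixes f :: "'b \<Rightarrow> 'c::finite"
  assumes "finite S"
  shows "(\<Sum>t\<in>UNIV. card {s\<in>S. f s = t} ^ 2) = collisions f S"
proof -
  have "(\<Sum>t\<in>UNIV. card {s\<in>S. f s = t} ^ 2)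
      = (\<Sum>t\<in>UNIV. \<Sum>s\<in>{s\<in>S. f s = t}. card {s'\<in>S. f s' = t})"
    by (simp add: power2_eq_square)
  also have "\<dots> = (\<Sum>t\<in>UNIV. \<Sum>s\<in>{s\<in>S. f s = t}. card {s'\<in>S. f s' = f s})"
    by (intro sum.cong) auto
  also have "\<dots> = collisions f S"
    unfolding collisions_def using assms by (intro sum.group) auto
  finally show ?thesis .
qed

lemma sum_squared_deviation_from_mean:
  fixes x :: "'a \<Rightarrow> real"
  assumes "finite T" "T \<noteq> {}"
  shows "(\<Sum>t\<in>T. (x t - sum x T / card T)\<^sup>2) = (\<Sum>t\<in>T. (x t)\<^sup>2) - (sum x T)\<^sup>2 / card T"
proof -
  define m where "m = sum x T / card T"
  have "card T > 0" using assms by (simp add: card_gt_0_iff)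
  have "(\<Sum>t\<in>T. (x t - m)\<^sup>2) = (\<Sum>t\<in>T. (x t)\<^sup>2) - 2 * m * sum x T + card T * m\<^sup>2"
    by (simp add: power2_diff sum.distrib sum_subtractf sum_distrib_left sum_distrib_right mult_ac)
  also have "\<dots> = (\<Sum>t\<in>T. (x t)\<^sup>2) - (sum x T)\<^sup>2 / card T"
    using \<open>card T > 0\<close> by (simp add: m_def field_simps power2_eq_square)
  finally show ?thesis unfolding m_def .
qed

lemma squared_sum_over_half_le:
  fixes d :: "'a \<Rightarrow> real"
  assumes "finite T" "Z \<subseteq> T" "2 * card Z = card T" "sum d T = 0"
  shows "(2 * sum d Z)\<^sup>2 \<le> card T * (\<Sum>t\<in>T. (d t)\<^sup>2)"
proof -
  have compl_sum: "sum d (T - Z) = - sum d Z"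
    using assms sum.subset_diff[of Z T d] by simp
  have compl_card: "card (T - Z) = card Z"
    using assms by (simp add: card_Diff_subset finite_subset)
  have "(sum d Z)\<^sup>2 \<le> (\<Sum>t\<in>Z. (d t)\<^sup>2) * card Z"
    by (rule sum_squared_le_sum_of_squares)
  moreover have "(sum d Z)\<^sup>2 \<le> (\<Sum>t\<in>T - Z. (d t)\<^sup>2) * card Z"
    using sum_squared_le_sum_of_squares[of d "T - Z"] compl_sum compl_card by simp
  moreover have "(\<Sum>t\<in>T. (d t)\<^sup>2) = (\<Sum>t\<in>Z. (d t)\<^sup>2) + (\<Sum>t\<in>T - Z. (d t)\<^sup>2)"
    using assms sum.subset_diff[of Z T "\<lambda>t. (d t)\<^sup>2"] by simp
  moreover have "real (card T) = 2 * card Z"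
    using assms(3) by simp
  ultimately show ?thesis
    by (simp add: algebra_simps)
qed

lemma dot2_eq_0_subset_line:
  fixes v :: "'a::field \<times> 'a"
  assumes "v \<noteq> 0"
  shows "{u. dot2 v u = 0} \<subseteq> range (\<lambda>c. (- c * snd v, c * fst v))"
proof
  fix u assume "u \<in> {u. dot2 v u = 0}"
  then have u: "fst v * fst u + snd v * snd u = 0" by (simp add: dot2_def)
  show "u \<in> range (\<lambda>c. (- c * snd v, c * fst v))"
  proof (cases "fst v = 0")
    case True
    with assms u have "snd v \<noteq> 0" "snd u = 0" by (auto simp: prod_eq_iff)
    with True show ?thesis
      by (intro image_eqI[of _ _ "- fst u / snd v"]) (auto simp: prod_eq_iff)
  next
    case False
    with u show ?thesis
      by (intro image_eqI[of _ _ "snd u / fst v"]) (auto simp: prod_eq_iff field_simps add_eq_0_iff)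
  qed
qed

lemma card_dot2_eq_le:
  fixes s s' :: "'a::{finite,field} \<times> 'a"
  assumes "s \<noteq> s'"
  shows "card {u. dot2 s u = dot2 s' u} \<le> CARD('a)"
proof -
  have "{u. dot2 s u = dot2 s' u} = {u. dot2 (s - s') u = 0}"
    by (auto simp: dot2_def algebra_simps)
  also have "\<dots> \<subseteq> range (\<lambda>c. (- c * snd (s - s'), c * fst (s - s')))"
    using assms by (intro dot2_eq_0_subset_line) simp
  finally show ?thesis
    by (meson card_image_le card_mono finite order_trans)
qed

lemma ex_card_mult_le_sum:
  fixes f :: "'a \<Rightarrow> nat"
  assumes "finite A" "A \<noteq> {}"
  shows "\<exists>a\<in>A. card A * f a \<le> sum f A"
proof (rule ccontr)
  assume "\<not> ?thesis"
  then have "(\<Sum>a\<in>A. sum f A) < (\<Sum>a\<in>A. card A * f a)"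
    using assms by (intro sum_strict_mono) auto
  then show False
    by (simp add: sum_distrib_left)
qed

lemma sum_dot2_collisions_le:
  fixes S :: "('a::{finite,field} \<times> 'a) set"
  shows "(\<Sum>u\<in>UNIV. collisions (\<lambda>s. dot2 s u) S) \<le> card S * CARD('a)^2 + card S ^ 2 * CARD('a)"
proof -
  have per_point: "(\<Sum>s'\<in>S. card {u. dot2 s' u = dot2 s u}) \<le> CARD('a)^2 + card S * CARD('a)"
    if "s \<in> S" for s
  proof -
    have "(\<Sum>s'\<in>S. card {u. dot2 s' u = dot2 s u})
        = card {u::'a \<times> 'a. True} + (\<Sum>s'\<in>S - {s}. card {u. dot2 s' u = dot2 s u})"
      using that by (simp add: sum.remove)
    also have "\<dots> \<le> CARD('a)^2 + (\<Sum>s'\<in>S - {s}. CARD('a))"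
      by (intro add_mono sum_mono card_dot2_eq_le) (auto simp: power2_eq_square)
    also have "\<dots> \<le> CARD('a)^2 + card S * CARD('a)"
      by (simp add: card_mono)
    finally show ?thesis .
  qed
  have "(\<Sum>u\<in>UNIV. collisions (\<lambda>s. dot2 s u) S)
      = (\<Sum>s\<in>S. \<Sum>u\<in>UNIV. card {s'\<in>S. dot2 s' u = dot2 s u})"
    unfolding collisions_def by (rule sum.swap)
  also have "\<dots> = (\<Sum>s\<in>S. \<Sum>s'\<in>S. card {u. dot2 s' u = dot2 s u})"
    by (intro sum.cong refl sum_multicount_gen) auto
  also have "\<dots> \<le> (\<Sum>s\<in>S. CARD('a)^2 + card S * CARD('a))"
    by (intro sum_mono per_point)
  also have "\<dots> = card S * CARD('a)^2 + card S ^ 2 * CARD('a)"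
    by (simp add: algebra_simps power2_eq_square)
  finally show ?thesis .
qed

lemma ex_dot2_few_collisions:
  fixes S :: "('a::{finite,field} \<times> 'a) set"
  shows "\<exists>u. CARD('a) * collisions (\<lambda>s. dot2 s u) S \<le> card S * CARD('a) + card S ^ 2"
proof -
  obtain u where "CARD('a \<times> 'a) * collisions (\<lambda>s. dot2 s u) S \<le> (\<Sum>u\<in>UNIV. collisions (\<lambda>s. dot2 s u) S)"
    using ex_card_mult_le_sum[of UNIV "\<lambda>u. collisions (\<lambda>s. dot2 s u) S"] by auto
  also have "\<dots> \<le> CARD('a) * (card S * CARD('a) + card S ^ 2)"
    using sum_dot2_collisions_le[of S] by (simp add: algebra_simps power2_eq_square)
  finally have "CARD('a) * (CARD('a) * collisions (\<lambda>s. dot2 s u) S)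
      \<le> CARD('a) * (card S * CARD('a) + card S ^ 2)"
    by (simp add: mult.assoc)
  then have "CARD('a) * collisions (\<lambda>s. dot2 s u) S \<le> card S * CARD('a) + card S ^ 2"
    by simp
  then show ?thesis
    by blast
qed

lemma card_preimage_half_deviation_le:
  fixes f :: "'b \<Rightarrow> 'c::finite"
  assumes "finite S"
    and few_collisions:
      "CARD('c) * collisions f S \<le> card S * CARD('c) + card S ^ 2"
    and half: "2 * card Z = CARD('c)"
  shows "(2 * real (card {s\<in>S. f s \<in> Z}) - card S)\<^sup>2 \<le> real CARD('c) * card S"
proof -
  define q where "q = real CARD('c)"
  define n where "n = real (card S)"
  define N where "N t = real (card {s\<in>S. f s = t})" for t
  define d where "d t = N t - n / q" for t
  have "q > 0"
    unfolding q_def by simp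
  have sum_N: "sum N Z' = real (card {s\<in>S. f s \<in> Z'})" for Z'
    unfolding N_def sum_card_fibres[OF \<open>finite S\<close> finite, symmetric] by simp
  have "sum d UNIV = 0"
    using \<open>q > 0\<close> by (simp add: d_def sum_subtractf sum_N n_def q_def)
  have "q * (\<Sum>t\<in>UNIV. (N t)\<^sup>2) \<le> q * n + n\<^sup>2"
  proof -
    have "real (CARD('c) * (\<Sum>t\<in>UNIV. card {s\<in>S. f s = t} ^ 2))
        \<le> real (card S * CARD('c) + card S ^ 2)"
      using few_collisions sum_card_fibres_squared[OF \<open>finite S\<close>, of f] by (simp only: of_nat_le_iff)
    then show ?thesis
      unfolding q_def n_def N_def by (simp add: algebra_simps)
  qed
  then have "(\<Sum>t\<in>UNIV. (N t)\<^sup>2) \<le> n + n\<^sup>2 / q"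
    using \<open>q > 0\<close> by (simp add: field_simps mult.commute)
  moreover have "(\<Sum>t\<in>UNIV. (d t)\<^sup>2) = (\<Sum>t\<in>UNIV. (N t)\<^sup>2) - n\<^sup>2 / q"
    using sum_squared_deviation_from_mean[of UNIV N] by (simp add: d_def sum_N n_def q_def)
  ultimately have "(\<Sum>t\<in>UNIV. (d t)\<^sup>2) \<le> n"
    by linarith
  have card_Z: "real (card Z) = q / 2"
    unfolding q_def using half[symmetric] by simp
  have "2 * sum d Z = 2 * (real (card {s\<in>S. f s \<in> Z}) - real (card Z) * (n / q))"
    by (simp add: d_def sum_subtractf sum_N)
  also have "\<dots> = 2 * real (card {s\<in>S. f s \<in> Z}) - n"
    using \<open>q > 0\<close> by (simp add: card_Z)
  finally have "(2 * real (card {s\<in>S. f s \<in> Z}) - n)\<^sup>2 = (2 * sum d Z)\<^sup>2"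
    by simp
  also have "\<dots> \<le> q * (\<Sum>t\<in>UNIV. (d t)\<^sup>2)"
    using squared_sum_over_half_le[of UNIV Z d] half \<open>sum d UNIV = 0\<close> by (simp add: q_def)
  also have "\<dots> \<le> q * n"
    using \<open>q > 0\<close> \<open>(\<Sum>t\<in>UNIV. (d t)\<^sup>2) \<le> n\<close> by simp
  finally show ?thesis
    unfolding q_def n_def .
qed

theorem mainTheorem2:
  fixes S :: "('a::{finite,field} \<times> 'a) set"
  assumes "\<exists>m::nat. m \<ge> 1 \<and> CARD('a) = 2 ^ m"
  shows "\<exists>u :: 'a \<times> 'a. \<forall>Z :: 'a set. 2 * card Z = CARD('a) \<longrightarrow>
           real (card {s \<in> S. dot2 s u \<in> Z}) \<le> (real (card S) + real CARD('a) powr 1.5) / 2"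
proof -
  obtain u where few_collisions:
    "CARD('a) * collisions (\<lambda>s. dot2 s u) S \<le> card S * CARD('a) + card S ^ 2"
    using ex_dot2_few_collisions by blast
  have "card S \<le> CARD('a) ^ 2"
    using card_mono[of "UNIV :: ('a \<times> 'a) set" S] by (simp add: power2_eq_square)
  then have "real CARD('a) * card S \<le> real CARD('a) ^ 3"
    by (simp add: power3_eq_cube power2_eq_square flip: of_nat_mult)
  also have "\<dots> = (real CARD('a) powr 1.5)\<^sup>2"
    by (simp add: powr_power)
  finally have "real CARD('a) * card S \<le> (real CARD('a) powr 1.5)\<^sup>2" .
  show ?thesis
  proof (intro exI allI impI)
    fix Z :: "'a set"
    assume "2 * card Z = CARD('a)"
    then have "(2 * real (card {s\<in>S. dot2 s u \<in> Z}) - card S)\<^sup>2 \<le> real CARD('a) * card S"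
      by (rule card_preimage_half_deviation_le[OF finite few_collisions])
    also note \<open>real CARD('a) * card S \<le> (real CARD('a) powr 1.5)\<^sup>2\<close>
    finally have "2 * real (card {s\<in>S. dot2 s u \<in> Z}) - card S \<le> real CARD('a) powr 1.5"
      by (rule power2_le_imp_le) simp
    then show "real (card {s \<in> S. dot2 s u \<in> Z}) \<le> (real (card S) + real CARD('a) powr 1.5) / 2"
      by simp
  qed
qed

end
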